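(* Let $R$ be a local ring and $s\in R$ a central element. Then $A\in M_2(R;s)$ is strongly clean if and only if one of the following holds: (1) $A\in U\big(M_2(R;s)\big)$; (2) $I_2-A\in U\big(M_2(R;s)\big)$; (3) $s\in U(R)$ and $A$ is similar to $\left[\begin{smallmatrix} w&0\\ 0&v\end{smallmatrix}\right]$ for some $v\in 1+J(R)$, $w\in J(R)$; (4) $s\in J(R)$ and $A$ is similar to $\left[\begin{smallmatrix} v&0\\ 0&w\end{smallmatrix}\right]$ or to $\left[\begin{smallmatrix} w&0\\ 0&v\end{smallmatrix}\right]$ for some $v\in 1+J(R)$, $w\in J(R)$.
   Context: All rings are associative with identity. A ring $R$ is local if $R/J(R)$ is a division ring, where $J(R)$ is the Jacobson radical; $U(T)$ is the group of units of a ring $T$. For a ring $R$ and a central element $s\in R$, $M_2(R;s)$ denotes the ring whose elements are the $2\times 2$ arrays $\left[\begin{smallmatrix} a&b\\ c&d\end{smallmatrix}\right]$ with $a,b,c,d\in R$, with componentwise addition and multiplication $\left[\begin{smallmatrix} a&b\\ c&d\end{smallmatrix}\right]\left[\begin{smallmatrix} a'&b'\\ c'&d'\end{smallmatrix}\right]=\left[\begin{smallmatrix} aa'+s^2bc'&ab'+bd'\\ ca'+dc'&s^2cb'+dd'\end{smallmatrix}\right]$, with identity $I_2$. Two elements $A,B\in M_2(R;s)$ are similar if $B=P^{-1}AP$ for some unit $P$ of $M_2(R;s)$. An element $a$ of a ring $T$ is strongly clean if there is an idempotent $e\in T$ with $ae=ea$ and $a-e\in U(T)$. *)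

theory Defs
  imports Main
begin

definition is_unit :: "'a::ring_1 \<Rightarrow> bool" where
  "is_unit x \<longleftrightarrow> (\<exists>y. x * y = 1 \<and> y * x = 1)"

definition left_ideal :: "'a::ring_1 set \<Rightarrow> bool" where
  "left_ideal I \<longleftrightarrow> 0 \<in> I \<and> (\<forall>x\<in>I. \<forall>y\<in>I. x + y \<in> I) \<and> (\<forall>x\<in>I. - x \<in> I)
     \<and> (\<forall>r. \<forall>x\<in>I. r * x \<in> I)"

definition maximal_left_ideal :: "'a::ring_1 set \<Rightarrow> bool" where
  "maximal_left_ideal M \<longleftrightarrow> left_ideal M \<and> M \<noteq> UNIV \<and>
     (\<forall>I. left_ideal I \<and> M \<subseteq> I \<longrightarrow> I = M \<or> I = UNIV)"

definition jacobson :: "'a::ring_1 set" where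
  "jacobson = \<Inter> {M. maximal_left_ideal M}"

text \<open>R is local iff R/J(R) is a division ring, written out on cosets:
  R/J(R) is nonzero and every coset x + J(R) different from J(R) has a two-sided inverse.\<close>
definition local_ring :: "'a::ring_1 itself \<Rightarrow> bool" where
  "local_ring (TYPE('a)) \<longleftrightarrow> (1::'a) \<notin> jacobson \<and>
     (\<forall>x::'a. x \<notin> jacobson \<longrightarrow> (\<exists>y. x * y - 1 \<in> jacobson \<and> y * x - 1 \<in> jacobson))"

definition central :: "'a::ring_1 \<Rightarrow> bool" where
  "central s \<longleftrightarrow> (\<forall>x. s * x = x * s)"

datatype 'a m2 = M2 'a 'a 'a 'a   (* M2 a b c d  =  [a b; c d] *)

fun m2add :: "'a::ring_1 m2 \<Rightarrow> 'a m2 \<Rightarrow> 'a m2" where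
  "m2add (M2 a b c d) (M2 a' b' c' d') = M2 (a + a') (b + b') (c + c') (d + d')"

fun m2sub :: "'a::ring_1 m2 \<Rightarrow> 'a m2 \<Rightarrow> 'a m2" where
  "m2sub (M2 a b c d) (M2 a' b' c' d') = M2 (a - a') (b - b') (c - c') (d - d')"

fun m2mult :: "'a::ring_1 \<Rightarrow> 'a m2 \<Rightarrow> 'a m2 \<Rightarrow> 'a m2" where
  "m2mult s (M2 a b c d) (M2 a' b' c' d') =
     M2 (a * a' + s^2 * b * c') (a * b' + b * d') (c * a' + d * c') (s^2 * c * b' + d * d')"

definition m2one :: "'a::ring_1 m2" where
  "m2one = M2 1 0 0 1"

definition m2_unit :: "'a::ring_1 \<Rightarrow> 'a m2 \<Rightarrow> bool" where
  "m2_unit s P \<longleftrightarrow> (\<exists>Q. m2mult s P Q = m2one \<and> m2mult s Q P = m2one)"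

definition m2_similar :: "'a::ring_1 \<Rightarrow> 'a m2 \<Rightarrow> 'a m2 \<Rightarrow> bool" where
  "m2_similar s A B \<longleftrightarrow> (\<exists>P Q. m2mult s P Q = m2one \<and> m2mult s Q P = m2one \<and>
       B = m2mult s (m2mult s Q A) P)"

definition m2_strongly_clean :: "'a::ring_1 \<Rightarrow> 'a m2 \<Rightarrow> bool" where
  "m2_strongly_clean s A \<longleftrightarrow> (\<exists>E. m2mult s E E = E \<and> m2mult s A E = m2mult s E A \<and>
       m2_unit s (m2sub A E))"

end

theory Submission
  imports Defs
begin

text \<open>
  An idempotent E = [e f; g h] of M_2(R;s) other than 0 and I is similar to diag(1,0) or
  diag(0,1). If the corner e is a unit, then h equals s^2 g e^-1 f, because the difference is
  (up to sign) an idempotent of the local ring R, hence 0 or -1, and -1 forces E = I; so the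
  Schur complement of [e -f; g 1-h] is 1, and this matrix conjugates E to diag(1,0). The case
  of a unit corner h is symmetric, and both corners cannot lie in J(R) unless E = 0. Conjugating a strongly clean
  decomposition A = E + U by the same matrix makes A diagonal, and a diagonal matrix which is
  neither a unit nor I minus a unit has one entry in J(R) and the other in 1 + J(R). When s is a
  unit, the antidiagonal matrix with entries s^-1 swaps the two diagonal entries.
\<close>

section \<open>The Jacobson radical and local rings\<close>

lemma left_ideal_eq_UNIV: "left_ideal I \<Longrightarrow> 1 \<in> I \<Longrightarrow> I = UNIV"
  unfolding left_ideal_def by (metis UNIV_eq_I mult.right_neutral)

lemma left_ideal_principal: "left_ideal (range (\<lambda>r. r * (a::'a::ring_1)))"
  unfolding left_ideal_def
proof (intro conjI ballI allI)
  show "0 \<in> range (\<lambda>r. r * a)" by (rule range_eqI[of _ _ 0]) simp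
next
  fix x y assume "x \<in> range (\<lambda>r. r * a)" "y \<in> range (\<lambda>r. r * a)"
  then obtain r r' where "x = r * a" "y = r' * a" by blast
  then have "x + y = (r + r') * a" by (simp add: distrib_right)
  then show "x + y \<in> range (\<lambda>r. r * a)" by blast
next
  fix x assume "x \<in> range (\<lambda>r. r * a)"
  then obtain r where "x = r * a" by blast
  then have "- x = (- r) * a" by simp
  then show "- x \<in> range (\<lambda>r. r * a)" by blast
next
  fix t x assume "x \<in> range (\<lambda>r. r * a)"
  then obtain r where "x = r * a" by blast
  then have "t * x = (t * r) * a" by (simp add: mult.assoc)
  then show "t * x \<in> range (\<lambda>r. r * a)" by blast
qed

lemma left_ideal_Union_chain:
  assumes "C \<noteq> {}" and ideals: "\<And>I. I \<in> C \<Longrightarrow> left_ideal I"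
    and chain: "\<And>I I'. I \<in> C \<Longrightarrow> I' \<in> C \<Longrightarrow> I \<subseteq> I' \<or> I' \<subseteq> I"
  shows "left_ideal (\<Union>C)"
  unfolding left_ideal_def
proof (intro conjI ballI allI)
  show "0 \<in> \<Union>C" using assms(1) ideals by (auto simp: left_ideal_def)
next
  fix x y assume "x \<in> \<Union>C" "y \<in> \<Union>C"
  then obtain X Y where XY: "X \<in> C" "Y \<in> C" "x \<in> X" "y \<in> Y" by blast
  then obtain I where "I \<in> C" "x \<in> I" "y \<in> I"
    using chain[OF XY(1,2)] by blast
  then show "x + y \<in> \<Union>C" using ideals[of I] unfolding left_ideal_def by blast
next
  fix x assume "x \<in> \<Union>C"
  then obtain I where "I \<in> C" "x \<in> I" by blast
  then show "- x \<in> \<Union>C" using ideals[of I] unfolding left_ideal_def by blast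
next
  fix r x assume "x \<in> \<Union>C"
  then obtain I where "I \<in> C" "x \<in> I" by blast
  then show "r * x \<in> \<Union>C" using ideals[of I] unfolding left_ideal_def by blast
qed

lemma maximal_left_ideal_containing:
  fixes L :: "'a::ring_1 set"
  assumes "left_ideal L" and "1 \<notin> L"
  obtains M where "maximal_left_ideal M" and "L \<subseteq> M"
proof -
  define \<I> where "\<I> = {I::'a set. left_ideal I \<and> L \<subseteq> I \<and> 1 \<notin> I}"
  have "\<exists>M\<in>\<I>. \<forall>I\<in>\<I>. M \<subseteq> I \<longrightarrow> I = M"
  proof (rule subset_Zorn)
    fix C assume chain: "subset.chain \<I> C"
    show "\<exists>U\<in>\<I>. \<forall>I\<in>C. I \<subseteq> U"
    proof (cases "C = {}")
      case True
      then show ?thesis using assms by (auto simp: \<I>_def)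
    next
      case False
      have "left_ideal (\<Union>C)"
        using chain False by (intro left_ideal_Union_chain) (auto simp: \<I>_def subset.chain_def)
      moreover have "L \<subseteq> \<Union>C" "1 \<notin> \<Union>C"
        using chain False unfolding \<I>_def subset.chain_def by blast+
      ultimately show ?thesis by (auto simp: \<I>_def)
    qed
  qed
  then obtain M where M: "M \<in> \<I>" and max: "\<forall>I\<in>\<I>. M \<subseteq> I \<longrightarrow> I = M" by blast
  have "maximal_left_ideal M"
    unfolding maximal_left_ideal_def
  proof (intro conjI allI impI)
    show "left_ideal M" "M \<noteq> UNIV" using M by (auto simp: \<I>_def)
    fix I assume "left_ideal I \<and> M \<subseteq> I"
    then show "I = M \<or> I = UNIV"
      using M max left_ideal_eq_UNIV[of I] by (cases "1 \<in> I") (auto simp: \<I>_def)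
  qed
  with M show thesis using that by (auto simp: \<I>_def)
qed

lemma left_ideal_jacobson: "left_ideal (jacobson :: 'a::ring_1 set)"
  unfolding jacobson_def left_ideal_def maximal_left_ideal_def by auto

lemma jacobson_add: "x \<in> jacobson \<Longrightarrow> y \<in> jacobson \<Longrightarrow> x + y \<in> (jacobson :: 'a::ring_1 set)"
  using left_ideal_jacobson unfolding left_ideal_def by blast

lemma jacobson_minus: "x \<in> jacobson \<Longrightarrow> - x \<in> (jacobson :: 'a::ring_1 set)"
  using left_ideal_jacobson unfolding left_ideal_def by blast

lemma jacobson_mult_left: "x \<in> jacobson \<Longrightarrow> r * x \<in> (jacobson :: 'a::ring_1 set)"
  using left_ideal_jacobson unfolding left_ideal_def by blast

lemma jacobson_diff: "x \<in> jacobson \<Longrightarrow> y \<in> jacobson \<Longrightarrow> x - y \<in> (jacobson :: 'a::ring_1 set)"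
  using jacobson_add[OF _ jacobson_minus] by force

lemma left_inverse_one_minus_jacobson:
  fixes x :: "'a::ring_1"
  assumes "x \<in> jacobson"
  shows "\<exists>u. u * (1 - x) = 1"
proof (rule ccontr)
  assume "\<nexists>u. u * (1 - x) = 1"
  then have "1 \<notin> range (\<lambda>r. r * (1 - x))" by (metis rangeE)
  then obtain M where M: "maximal_left_ideal M" "range (\<lambda>r. r * (1 - x)) \<subseteq> M"
    using maximal_left_ideal_containing left_ideal_principal by metis
  have "1 - x \<in> M" using M(2) by (metis mult_1_left rangeI subsetD)
  moreover have "x \<in> M" using assms M(1) by (auto simp: jacobson_def)
  moreover have "\<forall>a\<in>M. \<forall>b\<in>M. a + b \<in> M"
    using M(1) by (simp add: maximal_left_ideal_def left_ideal_def)
  ultimately have "1 \<in> M" by (metis diff_add_cancel)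
  then show False using M(1) left_ideal_eq_UNIV by (auto simp: maximal_left_ideal_def)
qed

lemma is_unit_iff_left_right_inverse:
  fixes x :: "'a::ring_1"
  shows "is_unit x \<longleftrightarrow> (\<exists>y. x * y = 1) \<and> (\<exists>z. z * x = 1)"
proof (intro iffI)
  assume "(\<exists>y. x * y = 1) \<and> (\<exists>z. z * x = 1)"
  then obtain y z where y: "x * y = 1" and z: "z * x = 1" by blast
  have "z = z * (x * y)" using y by simp
  also have "\<dots> = y" using z by (simp add: mult.assoc[symmetric])
  finally show "is_unit x" using y z unfolding is_unit_def by blast
qed (auto simp: is_unit_def)

lemma is_unit_one_minus_jacobson:
  fixes x :: "'a::ring_1"
  assumes x: "x \<in> jacobson"
  shows "is_unit (1 - x)"
proof -
  obtain u where u: "u * (1 - x) = 1" using left_inverse_one_minus_jacobson[OF x] by blast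
  have "u = 1 - (- (u * x))" using u by (simp add: algebra_simps)
  moreover have "- (u * x) \<in> jacobson" using x by (intro jacobson_minus jacobson_mult_left)
  ultimately obtain u' where u': "u' * u = 1" using left_inverse_one_minus_jacobson by metis
  \<comment> \<open>u has the left inverse u' and the right inverse 1 - x, so u' = 1 - x\<close>
  then have "is_unit u" using u is_unit_iff_left_right_inverse by blast
  then show ?thesis using u unfolding is_unit_def by (metis mult.assoc mult_1_left)
qed

lemma is_unit_mult: "is_unit (a::'a::ring_1) \<Longrightarrow> is_unit b \<Longrightarrow> is_unit (a * b)"
  unfolding is_unit_iff_left_right_inverse by (metis mult.assoc mult_1_left)

lemma is_unit_minus: "is_unit (x::'a::ring_1) \<Longrightarrow> is_unit (- x)"
  unfolding is_unit_def by (metis minus_mult_minus)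

lemma is_unit_if_minus_one_jacobson: "v - 1 \<in> jacobson \<Longrightarrow> is_unit (v::'a::ring_1)"
  using is_unit_one_minus_jacobson[OF jacobson_minus] by force

lemma is_unit_minus_one_if_jacobson: "w \<in> jacobson \<Longrightarrow> is_unit (w - 1::'a::ring_1)"
  using is_unit_minus[OF is_unit_one_minus_jacobson] by force

context
  assumes local: "local_ring TYPE('a::ring_1)"
begin

lemma one_notin_jacobson: "(1::'a) \<notin> jacobson"
  using local unfolding local_ring_def by blast

lemma is_unit_iff_notin_jacobson: "is_unit (x::'a) \<longleftrightarrow> x \<notin> jacobson"
proof
  assume "is_unit x"
  then obtain y where "y * x = 1" unfolding is_unit_def by blast
  then show "x \<notin> jacobson" using jacobson_mult_left[of x y] one_notin_jacobson by auto
next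
  assume "x \<notin> jacobson"
  then obtain y where y: "x * y - 1 \<in> jacobson" "y * x - 1 \<in> jacobson"
    using local unfolding local_ring_def by blast
  have "is_unit (x * y)" "is_unit (y * x)"
    using y by (metis is_unit_if_minus_one_jacobson)+
  then obtain z z' where "x * y * z = 1" "z' * (y * x) = 1" unfolding is_unit_def by blast
  then show "is_unit x" unfolding is_unit_iff_left_right_inverse by (metis mult.assoc)
qed

lemma jacobson_mult_right:
  assumes x: "(x::'a) \<in> jacobson"
  shows "x * r \<in> jacobson"
proof (cases "r \<in> jacobson")
  case True
  then show ?thesis by (rule jacobson_mult_left)
next
  case False
  then obtain r' where r': "r * r' = 1" "r' * r = 1"
    using is_unit_iff_notin_jacobson unfolding is_unit_def by blast
  show ?thesis
  proof (rule ccontr)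
    assume "x * r \<notin> jacobson"
    then have "is_unit (x * r * r')"
      using r' is_unit_mult is_unit_iff_notin_jacobson unfolding is_unit_def by metis
    then show False using x r'(1) is_unit_iff_notin_jacobson by (simp add: mult.assoc)
  qed
qed

lemma idempotent_eq_0_or_1:
  assumes "(x::'a) * x = x"
  shows "x = 0 \<or> x = 1"
proof (cases "x \<in> jacobson")
  case True
  then obtain y where "(1 - x) * y = 1"
    using is_unit_one_minus_jacobson unfolding is_unit_def by blast
  moreover have "x * (1 - x) = 0" using assms by (simp add: algebra_simps)
  ultimately have "x = 0" by (metis mult.assoc mult.right_neutral mult_zero_left)
  then show ?thesis by simp
next
  case False
  then obtain y where "y * x = 1"
    using is_unit_iff_notin_jacobson unfolding is_unit_def by blast
  then have "x = 1" using assms by (metis mult.assoc mult_1_left)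
  then show ?thesis by simp
qed

end

section \<open>The ring M_2(R;s)\<close>

lemma central_power2_commute: "central s \<Longrightarrow> x * s\<^sup>2 = s\<^sup>2 * x"
  unfolding central_def power2_eq_square by (metis mult.assoc)

lemma central_power2_left_commute: "central s \<Longrightarrow> x * (s\<^sup>2 * y) = s\<^sup>2 * (x * y)"
  using central_power2_commute by (metis mult.assoc)

lemma m2mult_assoc:
  "central s \<Longrightarrow> m2mult s (m2mult s A B) C = m2mult s A (m2mult s B C)"
  using central_power2_left_commute[of s]
  by (cases A; cases B; cases C) (simp add: algebra_simps)

lemma m2mult_one_left [simp]: "m2mult s m2one A = A"
  by (cases A) (simp add: m2one_def)

lemma m2mult_one_right [simp]: "m2mult s A m2one = A"
  by (cases A) (simp add: m2one_def)

lemma m2mult_sub_right: "m2mult s A (m2sub B C) = m2sub (m2mult s A B) (m2mult s A C)"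
  by (cases A; cases B; cases C) (simp add: algebra_simps)

lemma m2mult_sub_left: "m2mult s (m2sub B C) A = m2sub (m2mult s B A) (m2mult s C A)"
  by (cases A; cases B; cases C) (simp add: algebra_simps)

lemma m2_unit_mult:
  assumes "central s" "m2_unit s A" "m2_unit s B"
  shows "m2_unit s (m2mult s A B)"
proof -
  obtain A' B' where "m2mult s A A' = m2one" "m2mult s A' A = m2one"
    "m2mult s B B' = m2one" "m2mult s B' B = m2one"
    using assms(2,3) unfolding m2_unit_def by blast
  then have "m2mult s (m2mult s A B) (m2mult s B' A') = m2one"
    "m2mult s (m2mult s B' A') (m2mult s A B) = m2one"
    by (metis m2mult_assoc[OF assms(1)] m2mult_one_left)+
  then show ?thesis unfolding m2_unit_def by blast
qed

lemma m2_unit_diag_iff: "m2_unit s (M2 x 0 0 y) \<longleftrightarrow> is_unit x \<and> is_unit y"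
proof
  assume "m2_unit s (M2 x 0 0 y)"
  then obtain Q where "m2mult s (M2 x 0 0 y) Q = m2one" "m2mult s Q (M2 x 0 0 y) = m2one"
    unfolding m2_unit_def by blast
  then show "is_unit x \<and> is_unit y" by (cases Q) (auto simp: m2one_def is_unit_def)
next
  assume "is_unit x \<and> is_unit y"
  then obtain x' y' where "x * x' = 1" "x' * x = 1" "y * y' = 1" "y' * y = 1"
    unfolding is_unit_def by blast
  then have "m2mult s (M2 x 0 0 y) (M2 x' 0 0 y') = m2one" "m2mult s (M2 x' 0 0 y') (M2 x 0 0 y) = m2one"
    by (simp_all add: m2one_def)
  then show "m2_unit s (M2 x 0 0 y)" unfolding m2_unit_def by blast
qed

lemma m2_unit_schur_complement:
  assumes c: "central s" and a: "a * a' = 1" "a' * a = 1"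
    and "is_unit (d - s\<^sup>2 * c * a' * b)"
  shows "m2_unit s (M2 a b c d)"
proof -
  define x where "x = d - s\<^sup>2 * c * a' * b"
  have L: "m2_unit s (M2 1 0 (c * a') 1)"
    unfolding m2_unit_def by (rule exI[of _ "M2 1 0 (- (c * a')) 1"]) (simp add: m2one_def)
  have U: "m2_unit s (M2 1 (a' * b) 0 1)"
    unfolding m2_unit_def by (rule exI[of _ "M2 1 (- (a' * b)) 0 1"]) (simp add: m2one_def)
  have D: "m2_unit s (M2 a 0 0 x)"
    using assms unfolding m2_unit_diag_iff x_def is_unit_def by blast
  have "M2 a b c d = m2mult s (m2mult s (M2 1 0 (c * a') 1) (M2 a 0 0 x)) (M2 1 (a' * b) 0 1)"
    using a central_power2_left_commute[OF c]
    by (simp add: x_def algebra_simps) (metis mult.assoc mult_1_left)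
  then show ?thesis using L U D m2_unit_mult[OF c] by metis
qed

lemma m2_unit_sub_commute:
  assumes "central s" "m2_unit s (m2sub A B)"
  shows "m2_unit s (m2sub B A)"
proof -
  have "m2_unit s (M2 (-1) 0 0 (-1))"
    unfolding m2_unit_diag_iff using is_unit_minus[of 1] by (simp add: is_unit_def)
  moreover have "m2sub B A = m2mult s (M2 (-1) 0 0 (-1)) (m2sub A B)"
    by (cases A; cases B) simp
  ultimately show ?thesis using m2_unit_mult assms by metis
qed

definition m2_conj :: "'a::ring_1 \<Rightarrow> 'a m2 \<Rightarrow> 'a m2 \<Rightarrow> 'a m2 \<Rightarrow> 'a m2" where
  "m2_conj s Q P X = m2mult s (m2mult s Q X) P"

lemma m2_similar_iff_conj:
  "m2_similar s A B \<longleftrightarrow>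
     (\<exists>P Q. m2mult s P Q = m2one \<and> m2mult s Q P = m2one \<and> B = m2_conj s Q P A)"
  unfolding m2_similar_def m2_conj_def ..

lemma m2_conj_mult:
  assumes "central s" "m2mult s P Q = m2one"
  shows "m2_conj s Q P (m2mult s X Y) = m2mult s (m2_conj s Q P X) (m2_conj s Q P Y)"
  using assms unfolding m2_conj_def by (metis m2mult_assoc m2mult_one_left)

lemma m2_conj_one: "m2mult s Q P = m2one \<Longrightarrow> m2_conj s Q P m2one = m2one"
  unfolding m2_conj_def by simp

lemma m2_conj_sub: "m2_conj s Q P (m2sub X Y) = m2sub (m2_conj s Q P X) (m2_conj s Q P Y)"
  unfolding m2_conj_def by (simp add: m2mult_sub_left m2mult_sub_right)

lemma m2_conj_conj:
  assumes "central s" "m2mult s P Q = m2one"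
  shows "m2_conj s P Q (m2_conj s Q P X) = X"
  using assms unfolding m2_conj_def by (metis m2mult_assoc m2mult_one_left m2mult_one_right)

lemma m2_unit_conj:
  assumes c: "central s" and PQ: "m2mult s P Q = m2one" "m2mult s Q P = m2one"
    and "m2_unit s X"
  shows "m2_unit s (m2_conj s Q P X)"
  using assms(4) m2_conj_mult[OF c PQ(1)] m2_conj_one[OF PQ(2)]
  unfolding m2_unit_def by metis

lemma m2_similar_sym: "central s \<Longrightarrow> m2_similar s A B \<Longrightarrow> m2_similar s B A"
  unfolding m2_similar_iff_conj by (metis m2_conj_conj)

lemma m2_similar_trans:
  assumes c: "central s" and "m2_similar s A B" "m2_similar s B C"
  shows "m2_similar s A C"
proof -
  obtain P Q P' Q' where PQ: "m2mult s P Q = m2one" "m2mult s Q P = m2one"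
    and P'Q': "m2mult s P' Q' = m2one" "m2mult s Q' P' = m2one"
    and "C = m2_conj s Q' P' (m2_conj s Q P A)"
    using assms(2,3) unfolding m2_similar_iff_conj by blast
  then have "C = m2_conj s (m2mult s Q' Q) (m2mult s P P') A"
    by (simp add: m2_conj_def m2mult_assoc[OF c])
  moreover have "m2mult s (m2mult s P P') (m2mult s Q' Q) = m2one"
    "m2mult s (m2mult s Q' Q) (m2mult s P P') = m2one"
    using PQ P'Q' by (metis m2mult_assoc[OF c] m2mult_one_left)+
  ultimately show ?thesis unfolding m2_similar_iff_conj by blast
qed

lemma m2_unit_similar: "central s \<Longrightarrow> m2_similar s A B \<Longrightarrow> m2_unit s A \<Longrightarrow> m2_unit s B"
  unfolding m2_similar_iff_conj using m2_unit_conj by blast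

lemma m2_similar_one_minus:
  "m2_similar s A B \<Longrightarrow> m2_similar s (m2sub m2one A) (m2sub m2one B)"
  unfolding m2_similar_iff_conj by (metis m2_conj_one m2_conj_sub)

lemma m2_strongly_clean_similar:
  assumes c: "central s" and sim: "m2_similar s A B" and "m2_strongly_clean s A"
  shows "m2_strongly_clean s B"
proof -
  obtain P Q where PQ: "m2mult s P Q = m2one" "m2mult s Q P = m2one" and B: "B = m2_conj s Q P A"
    using sim unfolding m2_similar_iff_conj by blast
  obtain E where "m2mult s E E = E" "m2mult s A E = m2mult s E A" "m2_unit s (m2sub A E)"
    using assms(3) unfolding m2_strongly_clean_def by blast
  then have "m2mult s (m2_conj s Q P E) (m2_conj s Q P E) = m2_conj s Q P E"
    "m2mult s B (m2_conj s Q P E) = m2mult s (m2_conj s Q P E) B"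
    unfolding B using m2_conj_mult[OF c PQ(1)] by metis+
  moreover have "m2_unit s (m2sub B (m2_conj s Q P E))"
    unfolding B using m2_unit_conj[OF c PQ] m2_conj_sub \<open>m2_unit s (m2sub A E)\<close> by metis
  ultimately show ?thesis unfolding m2_strongly_clean_def by blast
qed

fun m2swap :: "'a m2 \<Rightarrow> 'a m2" where
  "m2swap (M2 a b c d) = M2 d c b a"

lemma m2swap_mult: "m2swap (m2mult s X Y) = m2mult s (m2swap X) (m2swap Y)"
  by (cases X; cases Y) (simp add: algebra_simps)

lemma m2swap_one [simp]: "m2swap m2one = m2one"
  by (simp add: m2one_def)

lemma m2_similar_swap:
  assumes "m2_similar s A B"
  shows "m2_similar s (m2swap A) (m2swap B)"
proof -
  obtain P Q where "m2mult s P Q = m2one" "m2mult s Q P = m2one" "B = m2mult s (m2mult s Q A) P"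
    using assms unfolding m2_similar_def by blast
  then have "m2mult s (m2swap P) (m2swap Q) = m2one" "m2mult s (m2swap Q) (m2swap P) = m2one"
    "m2swap B = m2mult s (m2mult s (m2swap Q) (m2swap A)) (m2swap P)"
    by (simp_all flip: m2swap_mult)
  then show ?thesis unfolding m2_similar_def by blast
qed

lemma m2_similar_diag_swap:
  assumes c: "central s" and "is_unit s"
  shows "m2_similar s (M2 v 0 0 w) (M2 w 0 0 v)"
proof -
  obtain t where t: "s * t = 1" "t * s = 1" using assms(2) unfolding is_unit_def by blast
  have t_central: "t * x = x * t" for x
  proof -
    have "t * x = t * (x * s) * t" using t by (simp add: mult.assoc)
    also have "\<dots> = t * (s * x) * t" using c unfolding central_def by simp
    also have "\<dots> = x * t" using t by (simp add: mult.assoc[symmetric])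
    finally show ?thesis .
  qed
  have st: "s\<^sup>2 * (t * (x * t)) = x" for x
    using t t_central unfolding power2_eq_square by (metis mult.assoc mult_1_left)
  have "m2mult s (M2 0 t t 0) (M2 0 t t 0) = m2one"
    using st[of 1] by (simp add: m2one_def mult.assoc)
  moreover have "M2 w 0 0 v = m2mult s (m2mult s (M2 0 t t 0) (M2 v 0 0 w)) (M2 0 t t 0)"
    using st by (simp add: mult.assoc)
  ultimately show ?thesis unfolding m2_similar_def by blast
qed

section \<open>Idempotents of M_2(R;s)\<close>

lemma m2_idempotent_schur_complement:
  fixes e :: "'a::ring_1"
  assumes c: "central s" and idem: "m2mult s (M2 e f g h) (M2 e f g h) = M2 e f g h"
    and e: "e * e' = 1" "e' * e = 1"
  defines "k \<equiv> s\<^sup>2 * g * e' * f - h"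
  shows "f * k = 0" and "k * g = 0" and "k * k = - k"
proof -
  note cs = central_power2_left_commute[OF c]
  have fg: "s\<^sup>2 * (f * g) = e - e * e" and fh: "f * h = f - e * f" and hg: "h * g = g - g * e"
    and hh: "h * h = h - s\<^sup>2 * g * f"
    using idem by (simp_all add: algebra_simps)
  have ee': "e' * (e * x) = x" "e * (e' * x) = x" for x
    using e by (simp_all add: mult.assoc[symmetric])
  have "f * (s\<^sup>2 * g * e' * f) = (e - e * e) * e' * f"
    using cs by (simp add: mult.assoc flip: fg)
  also have "\<dots> = f - e * f" using e ee' by (simp add: algebra_simps)
  finally show fk: "f * k = 0" unfolding k_def right_diff_distrib fh by simp
  have "s\<^sup>2 * g * e' * f * g = g * e' * (e - e * e)"
    using cs by (simp add: mult.assoc flip: fg)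
  also have "\<dots> = g - g * e" using e ee' by (simp add: algebra_simps)
  finally show "k * g = 0" unfolding k_def left_diff_distrib hg by simp
  have "h * (s\<^sup>2 * g * e' * f) = s\<^sup>2 * ((h * g) * e' * f)"
    using cs by (simp add: mult.assoc)
  also have "\<dots> = s\<^sup>2 * g * e' * f - s\<^sup>2 * g * f" using e ee' by (simp add: hg algebra_simps)
  finally have "h * k = k" unfolding k_def right_diff_distrib hh by simp
  moreover have "k * k = s\<^sup>2 * g * e' * (f * k) - h * k"
    unfolding k_def by (simp add: algebra_simps)
  ultimately show "k * k = - k" using fk by simp
qed

lemma m2_idempotent_one_minus:
  assumes "m2mult s E E = E"
  shows "m2mult s (m2sub m2one E) (m2sub m2one E) = m2sub m2one E"
  using assms by (cases E) (simp add: m2one_def algebra_simps)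

context
  assumes local: "local_ring TYPE('a::ring_1)"
begin

lemma m2_idempotent_corner_unit:
  fixes e :: 'a
  assumes c: "central s" and idem: "m2mult s (M2 e f g h) (M2 e f g h) = M2 e f g h"
    and e: "e * e' = 1" "e' * e = 1" and "M2 e f g h \<noteq> m2one"
  shows "h = s\<^sup>2 * g * e' * f"
proof -
  define k where "k = s\<^sup>2 * g * e' * f - h"
  note k = m2_idempotent_schur_complement[OF c idem e, folded k_def]
  have "k = 0 \<or> k = -1"
    using idempotent_eq_0_or_1[OF local, of "- k"] k(3) by (auto simp: minus_equation_iff)
  moreover have "k \<noteq> -1"
  proof
    assume "k = -1"
    then have "f = 0" "g = 0" using k(1,2) by simp_all
    moreover from this \<open>k = -1\<close> have "h = 1" unfolding k_def by simp
    moreover from \<open>f = 0\<close> have "e = 1"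
      using idem e by simp (metis mult.assoc mult_1_left)
    ultimately show False using assms(5) by (simp add: m2one_def)
  qed
  ultimately show ?thesis unfolding k_def by simp
qed

lemma m2_idempotent_similar_corner_unit:
  fixes e :: 'a
  assumes c: "central s" and idem: "m2mult s (M2 e f g h) (M2 e f g h) = M2 e f g h"
    and ne: "M2 e f g h \<noteq> m2one" and "is_unit e"
  shows "m2_similar s (M2 e f g h) (M2 1 0 0 0)"
proof -
  obtain e' where e: "e * e' = 1" "e' * e = 1" using assms(4) unfolding is_unit_def by blast
  have h: "h = s\<^sup>2 * g * e' * f" by (rule m2_idempotent_corner_unit[OF c idem e ne])
  define P where "P = M2 e (- f) g (1 - h)"
  have "(1 - h) - s\<^sup>2 * g * e' * (- f) = 1" using h by (simp add: mult.assoc)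
  then have "m2_unit s P"
    unfolding P_def using m2_unit_schur_complement[OF c e] is_unit_def by (metis mult_1_left)
  then obtain Q where PQ: "m2mult s P Q = m2one" "m2mult s Q P = m2one"
    unfolding m2_unit_def by blast
  have "m2mult s (M2 e f g h) P = m2mult s P (M2 1 0 0 0)"
    using idem by (simp add: P_def algebra_simps)
  then have "M2 1 0 0 0 = m2mult s (m2mult s Q (M2 e f g h)) P"
    using PQ(2) by (metis m2mult_assoc[OF c] m2mult_one_left)
  then show ?thesis using PQ unfolding m2_similar_def by blast
qed

lemma m2_idempotent_corners_jacobson:
  fixes e :: 'a
  assumes c: "central s" and idem: "m2mult s (M2 e f g h) (M2 e f g h) = M2 e f g h"
    and e: "e \<in> jacobson" and h: "h \<in> jacobson"
  shows "M2 e f g h = M2 0 0 0 0"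
proof (rule ccontr)
  assume "M2 e f g h \<noteq> M2 0 0 0 0"
  then have ne: "M2 (1 - e) (- f) (- g) (1 - h) \<noteq> m2one" by (auto simp: m2one_def)
  have idem': "m2mult s (M2 (1 - e) (- f) (- g) (1 - h)) (M2 (1 - e) (- f) (- g) (1 - h)) =
      M2 (1 - e) (- f) (- g) (1 - h)"
    using m2_idempotent_one_minus[OF idem] by (simp add: m2one_def)
  obtain u where u: "(1 - e) * u = 1" "u * (1 - e) = 1"
    using is_unit_one_minus_jacobson[OF e] unfolding is_unit_def by blast
  define m where "m = s\<^sup>2 * g * u * f"
  have "1 - h = m" using m2_idempotent_corner_unit[OF c idem' u ne] by (simp add: m_def)
  then have "m \<notin> jacobson" using h jacobson_add one_notin_jacobson[OF local] by fastforce
  then have "is_unit (m * m)" using is_unit_mult is_unit_iff_notin_jacobson[OF local] by blast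
  \<comment> \<open>yet m * m factors through s^2 f g = e - e e, which lies in the radical\<close>
  moreover have "m * m = s\<^sup>2 * g * u * (s\<^sup>2 * (f * g)) * (u * f)"
    using central_power2_left_commute[OF c, of f] by (simp add: m_def mult.assoc)
  moreover have "s\<^sup>2 * (f * g) = e - e * e" using idem by (simp add: algebra_simps)
  then have "s\<^sup>2 * (f * g) \<in> jacobson" using e by (simp add: jacobson_diff jacobson_mult_left)
  ultimately show False
    using jacobson_mult_right[OF local, OF jacobson_mult_left, of "s\<^sup>2 * (f * g)" "s\<^sup>2 * g * u" "u * f"]
      is_unit_iff_notin_jacobson[OF local]
    by simp
qed

lemma m2_idempotent_similar_diag:
  assumes c: "central s" and idem: "m2mult s E E = (E :: 'a m2)"
    and "E \<noteq> M2 0 0 0 0" and "E \<noteq> m2one"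
  shows "m2_similar s E (M2 1 0 0 0) \<or> m2_similar s E (M2 0 0 0 1)"
proof -
  obtain e f g h where E: "E = M2 e f g h" by (cases E)
  consider "is_unit e" | "is_unit h" | "e \<in> jacobson" "h \<in> jacobson"
    using is_unit_iff_notin_jacobson[OF local] by blast
  then show ?thesis
  proof cases
    case 1
    then show ?thesis using m2_idempotent_similar_corner_unit[OF c] idem assms(4) E by blast
  next
    case 2
    \<comment> \<open>m2swap is a ring automorphism moving the corner h to the top left\<close>
    have "m2mult s (M2 h g f e) (M2 h g f e) = M2 h g f e"
      using arg_cong[OF idem, of m2swap] unfolding E m2swap_mult by simp
    moreover have "M2 h g f e \<noteq> m2one" using assms(4) E by (auto simp: m2one_def)
    ultimately have "m2_similar s (M2 h g f e) (M2 1 0 0 0)"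
      using m2_idempotent_similar_corner_unit[OF c] 2 by blast
    then have "m2_similar s (m2swap (M2 h g f e)) (m2swap (M2 1 0 0 0))" by (rule m2_similar_swap)
    then show ?thesis using E by simp
  next
    case 3
    then show ?thesis using m2_idempotent_corners_jacobson[OF c] idem assms(3) E by blast
  qed
qed

lemma m2_similar_diag_if_commute_idempotent:
  assumes c: "central s" and "m2mult s E E = (E :: 'a m2)"
    and "E \<noteq> M2 0 0 0 0" and "E \<noteq> m2one" and AE: "m2mult s A E = m2mult s E A"
  obtains x y where "m2_similar s A (M2 x 0 0 y)"
proof -
  obtain P Q D where PQ: "m2mult s P Q = m2one" "m2mult s Q P = m2one"
    and D: "D = m2_conj s Q P E" "D = M2 1 0 0 0 \<or> D = M2 0 0 0 1"
    using m2_idempotent_similar_diag[OF assms(1-4)] unfolding m2_similar_iff_conj by blast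
  define B where "B = m2_conj s Q P A"
  have "m2mult s B D = m2mult s D B"
    unfolding B_def D(1) m2_conj_mult[OF c PQ(1), symmetric] AE ..
  then obtain x y where "B = M2 x 0 0 y" using D(2) by (cases B) auto
  moreover have "m2_similar s A B" unfolding B_def m2_similar_iff_conj using PQ by blast
  ultimately show thesis using that by blast
qed

lemma m2_diag_not_unit_cases:
  assumes "\<not> m2_unit s (M2 x 0 0 y)" and "\<not> m2_unit s (m2sub m2one (M2 x 0 0 (y::'a)))"
  shows "(x \<in> jacobson \<and> y - 1 \<in> jacobson) \<or> (x - 1 \<in> jacobson \<and> y \<in> jacobson)"
proof -
  have "x \<in> jacobson \<or> y \<in> jacobson" and "1 - x \<in> jacobson \<or> 1 - y \<in> jacobson"
    using assms is_unit_iff_notin_jacobson[OF local] by (auto simp: m2one_def m2_unit_diag_iff)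
  moreover have "a \<in> jacobson \<Longrightarrow> 1 - a \<notin> jacobson" for a :: 'a
    using jacobson_add[of a "1 - a"] one_notin_jacobson[OF local] by auto
  ultimately show ?thesis using jacobson_minus by fastforce
qed

lemma m2_strongly_clean_cases:
  assumes c: "central s" and "m2_strongly_clean s (A :: 'a m2)"
  shows "m2_unit s A \<or> m2_unit s (m2sub m2one A) \<or>
    (\<exists>v w. v - 1 \<in> jacobson \<and> w \<in> jacobson \<and>
      (m2_similar s A (M2 v 0 0 w) \<or> m2_similar s A (M2 w 0 0 v)))"
proof (cases "m2_unit s A \<or> m2_unit s (m2sub m2one A)")
  case False
  obtain E where idem: "m2mult s E E = E" and AE: "m2mult s A E = m2mult s E A"
    and unit: "m2_unit s (m2sub A E)"
    using assms(2) unfolding m2_strongly_clean_def by blast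
  have "E \<noteq> M2 0 0 0 0" using unit False by (cases A) auto
  moreover have "E \<noteq> m2one" using unit False m2_unit_sub_commute[OF c] by blast
  ultimately obtain x y where sim: "m2_similar s A (M2 x 0 0 y)"
    using m2_similar_diag_if_commute_idempotent[OF c idem _ _ AE] by blast
  then have "\<not> m2_unit s (M2 x 0 0 y)" "\<not> m2_unit s (m2sub m2one (M2 x 0 0 y))"
    using False m2_unit_similar[OF c] m2_similar_one_minus m2_similar_sym[OF c] by blast+
  then show ?thesis using m2_diag_not_unit_cases sim by blast
qed blast

end

lemma m2_strongly_clean_if_unit: "m2_unit s A \<Longrightarrow> m2_strongly_clean s A"
  unfolding m2_strongly_clean_def by (intro exI[of _ "M2 0 0 0 0"]) (cases A, simp)

lemma m2_strongly_clean_if_unit_one_minus: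
  "central s \<Longrightarrow> m2_unit s (m2sub m2one A) \<Longrightarrow> m2_strongly_clean s A"
  unfolding m2_strongly_clean_def by (intro exI[of _ m2one]) (simp add: m2_unit_sub_commute)

lemma m2_strongly_clean_if_similar_diag:
  assumes c: "central s" and v: "v - 1 \<in> jacobson" and w: "w \<in> jacobson"
    and sim: "m2_similar s A (M2 v 0 0 w) \<or> m2_similar s A (M2 w 0 0 v)"
  shows "m2_strongly_clean s A"
proof -
  have "is_unit v" "is_unit (w - 1)"
    using v w is_unit_if_minus_one_jacobson is_unit_minus_one_if_jacobson by blast+
  then have "m2_strongly_clean s (M2 v 0 0 w)" "m2_strongly_clean s (M2 w 0 0 v)"
    unfolding m2_strongly_clean_def
    by (intro exI[of _ "M2 0 0 0 1"] exI[of _ "M2 1 0 0 0"]; simp add: m2_unit_diag_iff)+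
  then show ?thesis using sim m2_strongly_clean_similar[OF c] m2_similar_sym[OF c] by blast
qed

theorem lemma2p11:
  fixes s :: "'a::ring_1" and A :: "'a m2"
  assumes "local_ring TYPE('a)" and "central s"
  shows "m2_strongly_clean s A \<longleftrightarrow>
    (m2_unit s A
     \<or> m2_unit s (m2sub m2one A)
     \<or> (is_unit s \<and> (\<exists>v w. v - 1 \<in> jacobson \<and> w \<in> jacobson \<and> m2_similar s A (M2 w 0 0 v)))
     \<or> (s \<in> jacobson \<and> (\<exists>v w. v - 1 \<in> jacobson \<and> w \<in> jacobson \<and>
            (m2_similar s A (M2 v 0 0 w) \<or> m2_similar s A (M2 w 0 0 v)))))"
    (is "_ \<longleftrightarrow> ?cases")
proof
  assume "m2_strongly_clean s A"
  then have "m2_unit s A \<or> m2_unit s (m2sub m2one A) \<or>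
    (\<exists>v w. v - 1 \<in> jacobson \<and> w \<in> jacobson \<and>
      (m2_similar s A (M2 v 0 0 w) \<or> m2_similar s A (M2 w 0 0 v)))"
    using m2_strongly_clean_cases assms by blast
  moreover have "is_unit s \<or> s \<in> jacobson" using is_unit_iff_notin_jacobson[OF assms(1)] by blast
  moreover have "m2_similar s A (M2 w 0 0 v)"
    if "is_unit s" "m2_similar s A (M2 v 0 0 w)" for v w
    using that m2_similar_trans[OF assms(2)] m2_similar_diag_swap[OF assms(2)] by blast
  ultimately show ?cases by blast
next
  assume ?cases
  then show "m2_strongly_clean s A"
    using m2_strongly_clean_if_unit m2_strongly_clean_if_unit_one_minus[OF assms(2)]
      m2_strongly_clean_if_similar_diag[OF assms(2)] by blast
qed

end
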